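(* For any finite quasi-discrete closure model $\mathcal{M}=((X,\mathcal{C}_R),\mathcal{V})$, any SLCS formula $\phi$ and any $x\in X$: $x\in\mathtt{Sat}(\mathcal{M},\phi)$ if and only if $\mathcal{M},x\models\phi$.
   Context: For $R\subseteq X\times X$, $\mathcal{C}_R(A)=A\cup\{x\mid\exists a\in A.(a,x)\in R\}$; a finite quasi-discrete closure model is $((X,\mathcal{C}_R),\mathcal{V})$ with $X$ finite and $\mathcal{V}:AP\to 2^X$. Paths are continuous maps $p:(\mathbb{N},\mathcal{C}_\succ)\to(X,\mathcal{C}_R)$, where $\succ=\{(n,n+1)\}$ and continuity means $p(\mathcal{C}_\succ(S))\subseteq\mathcal{C}_R(p(S))$ for all $S\subseteq\mathbb{N}$. SLCS formulas: $\Phi::=a\mid\top\mid\lnot\Phi\mid\Phi\land\Phi\mid\mathcal{N}\Phi\mid\Phi\,\mathcal{S}\,\Phi\mid\Phi\rightsquigarrow\Phi$. Semantics: $x\models a$ iff $x\in\mathcal{V}(a)$; boolean connectives classically; $x\models\mathcal{N}\phi$ iff $x\in\mathcal{C}_R(\{y\mid y\models\phi\})$; $x\models\phi_1\,\mathcal{S}\,\phi_2$ iff $x\models\phi_1$ and for every path $p$ with $p(0)=x$ and every $l\in\mathbb{N}$, if $p(l)\models\lnot\phi_1$ then some $k$ with $0<k\le l$ has $p(k)\models\phi_2$; $x\models\phi_1\rightsquigarrow\phi_2$ iff $x\models\phi_2$ and there exist $y$, a path $p$ and $l$ with $p(0)=y$, $p(l)=x$, $y\models\phi_1$ and $p(i)\models\phi_2$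 for all $0<i<l$. Let $\mathit{pre}(x)=\{y\mid(y,x)\in R\}$, $\mathit{post}(x)=\{y\mid(x,y)\in R\}$. The procedure $\mathtt{Sat}(\mathcal{M},\phi)$ is defined recursively: $\top\mapsto X$; $a\mapsto\mathcal{V}(a)$; $\lnot\phi_1\mapsto X\setminus\mathtt{Sat}(\mathcal{M},\phi_1)$; $\phi_1\land\phi_2\mapsto\mathtt{Sat}(\mathcal{M},\phi_1)\cap\mathtt{Sat}(\mathcal{M},\phi_2)$; $\mathcal{N}\phi_1\mapsto\mathcal{C}_R(\mathtt{Sat}(\mathcal{M},\phi_1))$. For $\phi_1\,\mathcal{S}\,\phi_2$: $V:=\mathtt{Sat}(\mathcal{M},\phi_1)$, $Q:=\mathtt{Sat}(\mathcal{M},\phi_2)$, $T:=\mathcal{C}_R(V\cup Q)\setminus(V\cup Q)$; while $T\neq\emptyset$: $T':=\emptyset$, for each $x\in T$ let $N:=\mathit{pre}(x)\cap V$, set $V:=V\setminus N$, $T':=T'\cup(N\setminus Q)$; then $T:=T'$; return $V$. For $\phi_1\rightsquigarrow\phi_2$: $V:=\mathtt{Sat}(\mathcal{M},\phi_1)$, $Q:=\mathtt{Sat}(\mathcal{M},\phi_2)$, $T:=\mathcal{C}_R(V)\cap Q$, $S:=T$, $Q:=Q\setminus T$; while $T\neq\emptyset$: $T':=\emptyset$, for each $x\in T$ set $T':=T'\cup(Q\cap\mathit{post}(x))$; then $Q:=Q\setminus T'$, $S:=S\cup T'$, $T:=T'$; return $S$. *)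

theory Defs
  imports Main "HOL-Library.While_Combinator"
begin

definition closureR :: "('a \<times> 'a) set \<Rightarrow> 'a set \<Rightarrow> 'a set" where
  "closureR R A = A \<union> {x. \<exists>a\<in>A. (a, x) \<in> R}"

definition qdcm :: "'a set \<Rightarrow> ('a \<times> 'a) set \<Rightarrow> ('p \<Rightarrow> 'a set) \<Rightarrow> bool" where
  "qdcm X R V \<longleftrightarrow> finite X \<and> R \<subseteq> X \<times> X \<and> (\<forall>a. V a \<subseteq> X)"

definition succ_rel :: "(nat \<times> nat) set" where
  "succ_rel = {(n, n + 1) | n. True}"

text \<open>Paths: continuous maps (nat, C_succ) \<rightarrow> (X, C_R).\<close>
definition is_path :: "'a set \<Rightarrow> ('a \<times> 'a) set \<Rightarrow> (nat \<Rightarrow> 'a) \<Rightarrow> bool" where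
  "is_path X R p \<longleftrightarrow> (\<forall>n. p n \<in> X) \<and>
     (\<forall>S. p ` closureR succ_rel S \<subseteq> closureR R (p ` S))"

datatype 'p slcs =
    Atom 'p
  | Top
  | Neg "'p slcs"
  | And "'p slcs" "'p slcs"
  | Near "'p slcs"
  | Surr "'p slcs" "'p slcs"
  | Reach "'p slcs" "'p slcs"

fun models :: "'a set \<Rightarrow> ('a \<times> 'a) set \<Rightarrow> ('p \<Rightarrow> 'a set) \<Rightarrow> 'a \<Rightarrow> 'p slcs \<Rightarrow> bool" where
  "models X R V x (Atom a) = (x \<in> V a)"
| "models X R V x Top = True"
| "models X R V x (Neg f) = (\<not> models X R V x f)"
| "models X R V x (And f g) = (models X R V x f \<and> models X R V x g)"
| "models X R V x (Near f) = (x \<in> closureR R {y \<in> X. models X R V y f})"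
| "models X R V x (Surr f g) = (models X R V x f \<and>
     (\<forall>p l. is_path X R p \<and> p 0 = x \<and> \<not> models X R V (p l) f \<longrightarrow>
        (\<exists>k. 0 < k \<and> k \<le> l \<and> models X R V (p k) g)))"
| "models X R V x (Reach f g) = (models X R V x g \<and>
     (\<exists>y p l. y \<in> X \<and> is_path X R p \<and> p 0 = y \<and> p l = x \<and> models X R V y f \<and>
        (\<forall>i. 0 < i \<and> i < l \<longrightarrow> models X R V (p i) g)))"

definition pre :: "'a set \<Rightarrow> ('a \<times> 'a) set \<Rightarrow> 'a \<Rightarrow> 'a set" where
  "pre X R x = {y \<in> X. (y, x) \<in> R}"

definition post :: "'a set \<Rightarrow> ('a \<times> 'a) set \<Rightarrow> 'a \<Rightarrow> 'a set" where
  "post X R x = {y \<in> X. (x, y) \<in> R}"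

text \<open>The "for each x in T" loops iterate over some (arbitrarily chosen) duplicate-free
  enumeration of the finite set T.\<close>
definition enum_set :: "'a set \<Rightarrow> 'a list" where
  "enum_set T = (SOME xs. set xs = T \<and> distinct xs)"

definition surr_inner :: "'a set \<Rightarrow> ('a \<times> 'a) set \<Rightarrow> 'a set \<Rightarrow> 'a \<Rightarrow> 'a set \<times> 'a set \<Rightarrow> 'a set \<times> 'a set" where
  "surr_inner X R Q x st =
     (let (V, T') = st; N = pre X R x \<inter> V in (V - N, T' \<union> (N - Q)))"

definition surr_step :: "'a set \<Rightarrow> ('a \<times> 'a) set \<Rightarrow> 'a set \<Rightarrow> 'a set \<times> 'a set \<Rightarrow> 'a set \<times> 'a set" where
  "surr_step X R Q st =
     (let (V, T) = st; (V', T') = fold (surr_inner X R Q) (enum_set T) (V, {}) in (V', T'))"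

definition sat_surr :: "'a set \<Rightarrow> ('a \<times> 'a) set \<Rightarrow> 'a set \<Rightarrow> 'a set \<Rightarrow> 'a set" where
  "sat_surr X R V0 Q =
     fst (while (\<lambda>(V, T). T \<noteq> {}) (surr_step X R Q)
            (V0, closureR R (V0 \<union> Q) - (V0 \<union> Q)))"

definition reach_step :: "'a set \<Rightarrow> ('a \<times> 'a) set \<Rightarrow> 'a set \<times> 'a set \<times> 'a set \<Rightarrow> 'a set \<times> 'a set \<times> 'a set" where
  "reach_step X R st =
     (let (T, Q, S) = st;
          T' = fold (\<lambda>x T'. T' \<union> (Q \<inter> post X R x)) (enum_set T) {}
      in (T', Q - T', S \<union> T'))"

definition sat_reach :: "'a set \<Rightarrow> ('a \<times> 'a) set \<Rightarrow> 'a set \<Rightarrow> 'a set \<Rightarrow> 'a set" where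
  "sat_reach X R V0 Q0 =
     (let T = closureR R V0 \<inter> Q0
      in snd (snd (while (\<lambda>(T, Q, S). T \<noteq> {}) (reach_step X R) (T, Q0 - T, T))))"

fun Sat :: "'a set \<Rightarrow> ('a \<times> 'a) set \<Rightarrow> ('p \<Rightarrow> 'a set) \<Rightarrow> 'p slcs \<Rightarrow> 'a set" where
  "Sat X R V Top = X"
| "Sat X R V (Atom a) = V a"
| "Sat X R V (Neg f) = X - Sat X R V f"
| "Sat X R V (And f g) = Sat X R V f \<inter> Sat X R V g"
| "Sat X R V (Near f) = closureR R (Sat X R V f)"
| "Sat X R V (Surr f g) = sat_surr X R (Sat X R V f) (Sat X R V g)"
| "Sat X R V (Reach f g) = sat_reach X R (Sat X R V f) (Sat X R V g)"

end

theory Submission imports Defs begin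

text \<open>
  A path of a quasi-discrete closure space is just a sequence whose consecutive points are
  equal or R-related, so both path operators reduce to reachability along R-steps that stay
  inside a set. Reach f g holds exactly on the points reachable inside [g] from C_R [f] \<inter> [g],
  and Surr f g exactly on the points of [f] that cannot escape, i.e. cannot reach, through
  [f] - [g], an edge leaving [f] \<union> [g]. The reach loop is a breadth-first search computing the
  first set, the surrounded loop a backward search deleting the escaping points from [f].
  Both are verified by loop invariants and terminate because card Q + card T (resp.
  card V + card T) strictly decreases while the frontier T is nonempty.
\<close>

lemma set_enum_set: "finite T \<Longrightarrow> set (enum_set T) = T"
  unfolding enum_set_def by (metis (mono_tags, lifting) finite_distinct_list someI_ex)

lemma fold_union_eq: "fold (\<lambda>x A. A \<union> f x) xs B = B \<union> (\<Union>x\<in>set xs. f x)"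
  by (induction xs arbitrary: B) auto

lemma fold_surr_inner:
  "fold (surr_inner X R Q) xs (V, A) =
     (V - (\<Union>x\<in>set xs. pre X R x), A \<union> ((V \<inter> (\<Union>x\<in>set xs. pre X R x)) - Q))"
  by (induction xs arbitrary: V A) (auto simp: surr_inner_def Let_def)

lemma surr_step_eq:
  "finite T \<Longrightarrow> surr_step X R Q (V, T) =
     (V - (\<Union>x\<in>T. pre X R x), (V \<inter> (\<Union>x\<in>T. pre X R x)) - Q)"
  by (simp add: surr_step_def fold_surr_inner set_enum_set)

lemma reach_step_eq:
  "finite T \<Longrightarrow> reach_step X R (T, Q, S) =
     ((\<Union>x\<in>T. Q \<inter> post X R x), Q - (\<Union>x\<in>T. Q \<inter> post X R x), S \<union> (\<Union>x\<in>T. Q \<inter> post X R x))"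
  by (simp add: reach_step_def fold_union_eq set_enum_set)

lemma closureR_iff: "x \<in> closureR R A \<longleftrightarrow> x \<in> A \<or> (\<exists>a\<in>A. (a, x) \<in> R)"
  by (auto simp: closureR_def)

subsection \<open>Paths\<close>

lemma is_path_iff:
  "is_path X R p \<longleftrightarrow> (\<forall>n. p n \<in> X) \<and> (\<forall>n. p (Suc n) = p n \<or> (p n, p (Suc n)) \<in> R)"
proof
  assume p: "is_path X R p"
  show "(\<forall>n. p n \<in> X) \<and> (\<forall>n. p (Suc n) = p n \<or> (p n, p (Suc n)) \<in> R)"
  proof (intro conjI allI)
    fix n
    show "p n \<in> X" using p by (simp add: is_path_def)
    have "Suc n \<in> closureR succ_rel {n}" by (simp add: closureR_def succ_rel_def)
    then have "p (Suc n) \<in> closureR R (p ` {n})" using p unfolding is_path_def by blast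
    then show "p (Suc n) = p n \<or> (p n, p (Suc n)) \<in> R" by (simp add: closureR_def)
  qed
next
  assume p: "(\<forall>n. p n \<in> X) \<and> (\<forall>n. p (Suc n) = p n \<or> (p n, p (Suc n)) \<in> R)"
  have "p m \<in> closureR R (p ` S)" if m: "m \<in> closureR succ_rel S" for S m
  proof (cases "m \<in> S")
    case False
    then obtain n where "n \<in> S" "m = Suc n" using m by (auto simp: closureR_def succ_rel_def)
    then show ?thesis using p by (auto simp: closureR_def)
  qed (simp add: closureR_def)
  then show "is_path X R p" using p unfolding is_path_def by blast
qed

lemma is_path_const: "a \<in> X \<Longrightarrow> is_path X R (\<lambda>_. a)"
  by (simp add: is_path_iff)

lemma is_path_snoc:
  assumes p: "is_path X R p" and pz: "(p l, z) \<in> R" and R: "R \<subseteq> X \<times> X"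
  shows "is_path X R (\<lambda>n. if n \<le> l then p n else z)"
  unfolding is_path_iff
proof (intro conjI allI)
  fix n
  show "(if n \<le> l then p n else z) \<in> X" using p pz R by (auto simp: is_path_iff)
  show "(if Suc n \<le> l then p (Suc n) else z) = (if n \<le> l then p n else z) \<or>
    (if n \<le> l then p n else z, if Suc n \<le> l then p (Suc n) else z) \<in> R"
    using p pz by (cases "Suc n \<le> l"; cases "n = l") (auto simp: is_path_iff)
qed

lemma is_path_cons:
  assumes p: "is_path X R p" and "v \<in> X" "v = p 0 \<or> (v, p 0) \<in> R"
  shows "is_path X R (\<lambda>n. if n = 0 then v else p (n - 1))"
  unfolding is_path_iff
proof (intro conjI allI)
  fix n
  show "(if n = 0 then v else p (n - 1)) \<in> X" using p assms(2) by (auto simp: is_path_iff)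
  show "(if Suc n = 0 then v else p (Suc n - 1)) = (if n = 0 then v else p (n - 1)) \<or>
    (if n = 0 then v else p (n - 1), if Suc n = 0 then v else p (Suc n - 1)) \<in> R"
    using p assms(3) by (cases n) (auto simp: is_path_iff)
qed

lemma rtrancl_restrict_target: "(a, b) \<in> (R \<inter> UNIV \<times> Q)\<^sup>* \<Longrightarrow> b = a \<or> b \<in> Q"
  by (induction rule: rtrancl_induct) auto

lemma path_if_rtrancl_restrict:
  assumes "(a, b) \<in> (R \<inter> UNIV \<times> Q)\<^sup>*" "a \<in> X" "R \<subseteq> X \<times> X"
  shows "\<exists>p l. is_path X R p \<and> p 0 = a \<and> p l = b \<and> (\<forall>i. 0 < i \<and> i \<le> l \<longrightarrow> p i \<in> Q)"
  using assms(1)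
proof (induction rule: rtrancl_induct)
  case base
  show ?case using is_path_const[OF assms(2)] by (intro exI[of _ "\<lambda>_. a"] exI[of _ 0]) auto
next
  case (step y z)
  then obtain p l where p: "is_path X R p" "p 0 = a" "p l = y" "\<forall>i. 0 < i \<and> i \<le> l \<longrightarrow> p i \<in> Q"
    by blast
  have "(p l, z) \<in> R" "z \<in> Q" using step(2) p(3) by auto
  then show ?case
    using p is_path_snoc[OF p(1) _ assms(3)]
    by (intro exI[of _ "\<lambda>n. if n \<le> l then p n else z"] exI[of _ "Suc l"]) auto
qed

lemma rtrancl_restrict_if_path:
  assumes "is_path X R p" "m \<le> l" "\<forall>i. m < i \<and> i \<le> l \<longrightarrow> p i \<in> Q"
  shows "(p m, p l) \<in> (R \<inter> UNIV \<times> Q)\<^sup>*"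
  using assms(2,3)
proof (induction l)
  case (Suc l)
  show ?case
  proof (cases "m = Suc l")
    case False
    then have "(p m, p l) \<in> (R \<inter> UNIV \<times> Q)\<^sup>*" "p (Suc l) \<in> Q" using Suc by auto
    moreover have "p (Suc l) = p l \<or> (p l, p (Suc l)) \<in> R"
      using assms(1) by (simp add: is_path_iff)
    ultimately show ?thesis by (auto intro: rtrancl_into_rtrancl)
  qed simp
qed simp

subsection \<open>The reachability operator\<close>

lemma models_Reach_set:
  fixes V :: "'p \<Rightarrow> 'a set" and f g :: "'p slcs"
  assumes R: "R \<subseteq> X \<times> X"
  defines "F \<equiv> {y \<in> X. models X R V y f}" and "G \<equiv> {y \<in> X. models X R V y g}"
  shows "{x \<in> X. models X R V x (Reach f g)} = (R \<inter> UNIV \<times> G)\<^sup>* `` (closureR R F \<inter> G)"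
proof (intro set_eqI iffI)
  fix x assume "x \<in> {x \<in> X. models X R V x (Reach f g)}"
  then have x: "x \<in> G" and "\<exists>y p l. y \<in> X \<and> is_path X R p \<and> p 0 = y \<and> p l = x \<and>
      models X R V y f \<and> (\<forall>i. 0 < i \<and> i < l \<longrightarrow> models X R V (p i) g)"
    by (simp_all add: G_def)
  then obtain y p l where y: "y \<in> F" and p: "is_path X R p" "p 0 = y" "p l = x"
    and between: "\<forall>i. 0 < i \<and> i < l \<longrightarrow> models X R V (p i) g"
    unfolding F_def by blast
  have pG: "p i \<in> G" if "0 < i" "i \<le> l" for i
    using that between p(1,3) x by (cases "i = l") (auto simp: G_def is_path_iff)
  show "x \<in> (R \<inter> UNIV \<times> G)\<^sup>* `` (closureR R F \<inter> G)"
  proof (cases "l = 0")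
    case True
    then show ?thesis using p x y by (auto simp: closureR_iff)
  next
    case False
    have "p 1 = p 0 \<or> (p 0, p 1) \<in> R"
      using p(1) by (simp add: is_path_iff)
    then have "p 1 \<in> closureR R F" using p(2) y by (auto simp: closureR_iff)
    moreover have "(p 1, x) \<in> (R \<inter> UNIV \<times> G)\<^sup>*"
      using rtrancl_restrict_if_path[OF p(1), of 1 l G] pG False p(3) by simp
    moreover have "p 1 \<in> G" using pG False by simp
    ultimately show ?thesis by (meson ImageI IntI)
  qed
next
  fix x assume "x \<in> (R \<inter> UNIV \<times> G)\<^sup>* `` (closureR R F \<inter> G)"
  then obtain t where t: "t \<in> closureR R F" "t \<in> G" "(t, x) \<in> (R \<inter> UNIV \<times> G)\<^sup>*" by blast
  then obtain v where v: "v \<in> F" "v = t \<or> (v, t) \<in> R" by (auto simp: closureR_iff)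
  have "t \<in> X" using t(2) by (simp add: G_def)
  then obtain p l where p: "is_path X R p" "p 0 = t" "p l = x" "\<forall>i. 0 < i \<and> i \<le> l \<longrightarrow> p i \<in> G"
    using path_if_rtrancl_restrict[OF t(3) _ R] by blast
  define q where "q = (\<lambda>n. if n = 0 then v else p (n - 1))"
  have "v \<in> X" using v(1) by (simp add: F_def)
  then have "is_path X R q" unfolding q_def using is_path_cons[OF p(1)] v(2) p(2) by simp
  moreover have "models X R V (q i) g" if "0 < i" "i < Suc l" for i
  proof -
    have "q i \<in> G" using that p(2,4) t(2) by (cases "i = 1") (auto simp: q_def)
    then show ?thesis by (simp add: G_def)
  qed
  moreover have "x \<in> G" using rtrancl_restrict_target[OF t(3)] t(2) by blast
  moreover have "q 0 = v" "q (Suc l) = x" "models X R V v f" using p(3) v(1) by (auto simp: q_def F_def)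
  ultimately have "models X R V x (Reach f g)"
    using \<open>v \<in> X\<close> unfolding models.simps(7)
    by (intro conjI exI[of _ v] exI[of _ q] exI[of _ "Suc l"]) (auto simp: G_def)
  then show "x \<in> {x \<in> X. models X R V x (Reach f g)}" using \<open>x \<in> G\<close> by (simp add: G_def)
qed

subsection \<open>The surrounded operator\<close>

definition escape :: "('a \<times> 'a) set \<Rightarrow> 'a set \<Rightarrow> 'a set \<Rightarrow> 'a set" where
  "escape R F G =
     {x \<in> F. \<exists>w z. (x, w) \<in> (R \<inter> UNIV \<times> (F - G))\<^sup>* \<and> (w, z) \<in> R \<and> z \<notin> F \<union> G}"

lemma escape_subset: "escape R F G \<subseteq> F"
  by (auto simp: escape_def)

lemma escape_if_edge:
  assumes "a \<in> F" "(a, t) \<in> R" "t \<notin> G" "t \<in> escape R F G \<or> t \<notin> F"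
  shows "a \<in> escape R F G"
  using assms(4)
proof
  assume "t \<in> escape R F G"
  then obtain w z where "t \<in> F" "(t, w) \<in> (R \<inter> UNIV \<times> (F - G))\<^sup>*" "(w, z) \<in> R" "z \<notin> F \<union> G"
    by (auto simp: escape_def)
  moreover have "(a, t) \<in> R \<inter> UNIV \<times> (F - G)" using assms(2,3) \<open>t \<in> F\<close> by blast
  ultimately show ?thesis using assms(1) by (auto simp: escape_def intro: converse_rtrancl_into_rtrancl)
next
  assume "t \<notin> F"
  then show ?thesis using assms(1-3) by (auto simp: escape_def)
qed

lemma escape_disjoint_if_closed:
  assumes "A \<subseteq> F" and closed: "\<forall>a\<in>A. \<forall>b. (a, b) \<in> R \<longrightarrow> b \<in> A \<union> G"
  shows "A \<inter> escape R F G = {}"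
proof (rule ccontr)
  assume "A \<inter> escape R F G \<noteq> {}"
  then obtain x w z where x: "x \<in> A" and xw: "(x, w) \<in> (R \<inter> UNIV \<times> (F - G))\<^sup>*"
    and wz: "(w, z) \<in> R" "z \<notin> F \<union> G"
    by (auto simp: escape_def)
  from xw x have "w \<in> A"
    by (induction rule: rtrancl_induct) (use closed in blast)+
  then show False using wz closed \<open>A \<subseteq> F\<close> by blast
qed

lemma not_models_Surr_if_escape:
  fixes V :: "'p \<Rightarrow> 'a set" and f g :: "'p slcs"
  assumes R: "R \<subseteq> X \<times> X"
    and x: "x \<in> escape R {y \<in> X. models X R V y f} {y \<in> X. models X R V y g}"
  shows "\<not> models X R V x (Surr f g)"
proof
  define F G where "F = {y \<in> X. models X R V y f}" and "G = {y \<in> X. models X R V y g}"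
  assume surr: "models X R V x (Surr f g)"
  obtain w z where xw: "(x, w) \<in> (R \<inter> UNIV \<times> (F - G))\<^sup>*" and wz: "(w, z) \<in> R" "z \<notin> F \<union> G"
    using x by (auto simp: escape_def F_def G_def)
  have "x \<in> X" using x escape_subset by fastforce
  then obtain p l where p: "is_path X R p" "p 0 = x" "p l = w" "\<forall>i. 0 < i \<and> i \<le> l \<longrightarrow> p i \<in> F - G"
    using path_if_rtrancl_restrict[OF xw _ R] by blast
  define q where "q = (\<lambda>n. if n \<le> l then p n else z)"
  have "z \<in> X" using wz(1) R by blast
  have "is_path X R q" unfolding q_def using is_path_snoc[OF p(1) _ R] wz(1) p(3) by simp
  moreover have "\<not> models X R V (q (Suc l)) f" using wz(2) \<open>z \<in> X\<close> by (simp add: q_def F_def)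
  moreover have "q 0 = x" using p(2) by (simp add: q_def)
  ultimately obtain k where k: "0 < k" "k \<le> Suc l" "models X R V (q k) g"
    using surr unfolding models.simps(6) by blast
  have "q k \<in> X" using \<open>is_path X R q\<close> by (simp add: is_path_iff)
  then have "q k \<in> G" using k(3) by (simp add: G_def)
  moreover have "q k \<notin> G" using k(1,2) p(4) wz(2) by (cases "k = Suc l") (auto simp: q_def)
  ultimately show False by blast
qed

lemma models_Surr_if_not_escape:
  fixes X :: "'a set" and R :: "('a \<times> 'a) set" and V :: "'p \<Rightarrow> 'a set" and f g :: "'p slcs"
  defines "F \<equiv> {y \<in> X. models X R V y f}" and "G \<equiv> {y \<in> X. models X R V y g}"
  assumes x: "x \<in> F" "x \<notin> escape R F G"
  shows "models X R V x (Surr f g)"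
  unfolding models.simps(6)
proof (intro conjI allI impI)
  show "models X R V x f" using x(1) by (simp add: F_def)
  fix p l assume p: "is_path X R p \<and> p 0 = x \<and> \<not> models X R V (p l) f"
  have pX: "p n \<in> X" for n using p by (simp add: is_path_iff)
  show "\<exists>k>0. k \<le> l \<and> models X R V (p k) g"
  proof (rule ccontr)
    assume no_g: "\<not> (\<exists>k>0. k \<le> l \<and> models X R V (p k) g)"
    define m where "m = (LEAST n. \<not> models X R V (p n) f)"
    have "\<not> models X R V (p l) f" using p by blast
    then have m: "\<not> models X R V (p m) f" "m \<le> l"
      unfolding m_def by (fact LeastI, fact Least_le)
    have before_m: "models X R V (p i) f" if "i < m" for i
      using that not_less_Least unfolding m_def by blast
    have "m \<noteq> 0"
    proof
      assume "m = 0"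
      then show False using m(1) p x(1) by (simp add: F_def)
    qed
    then obtain j where j: "m = Suc j" using not0_implies_Suc by blast
    have "p i \<in> F - G" if "0 < i" "i \<le> j" for i
    proof -
      have "i \<le> l" "i < m" using that j m(2) by auto
      then show ?thesis using that no_g before_m pX by (auto simp: F_def G_def)
    qed
    then have "(x, p j) \<in> (R \<inter> UNIV \<times> (F - G))\<^sup>*"
      using rtrancl_restrict_if_path[of X R p 0 j "F - G"] p by auto
    moreover have "(p j, p m) \<in> R"
    proof -
      have "p m \<noteq> p j" using m(1) before_m[of j] j by auto
      then show ?thesis using p j by (auto simp: is_path_iff)
    qed
    moreover have "p m \<notin> F \<union> G" using m no_g \<open>m \<noteq> 0\<close> by (auto simp: F_def G_def)
    ultimately have "x \<in> escape R F G" using x(1) by (auto simp: escape_def)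
    then show False using x(2) by blast
  qed
qed

lemma models_Surr_set:
  fixes V :: "'p \<Rightarrow> 'a set" and f g :: "'p slcs"
  assumes "R \<subseteq> X \<times> X"
  defines "F \<equiv> {y \<in> X. models X R V y f}" and "G \<equiv> {y \<in> X. models X R V y g}"
  shows "{x \<in> X. models X R V x (Surr f g)} = F - escape R F G"
proof (intro set_eqI iffI)
  fix x assume x: "x \<in> {x \<in> X. models X R V x (Surr f g)}"
  then have "x \<in> F" by (simp add: F_def)
  moreover have "x \<notin> escape R F G"
    using x not_models_Surr_if_escape[OF assms(1), of x V f g]
    by (auto simp: F_def G_def simp del: models.simps(6))
  ultimately show "x \<in> F - escape R F G" by blast
next
  fix x assume "x \<in> F - escape R F G"
  then show "x \<in> {x \<in> X. models X R V x (Surr f g)}"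
    using models_Surr_if_not_escape[of x X R V f g] by (simp add: F_def G_def)
qed

subsection \<open>Correctness of the surrounded loop\<close>

definition surr_invariant ::
  "'a set \<Rightarrow> ('a \<times> 'a) set \<Rightarrow> 'a set \<Rightarrow> 'a set \<Rightarrow> 'a set \<times> 'a set \<Rightarrow> bool" where
  "surr_invariant X R F G = (\<lambda>(V, T). V \<subseteq> F \<and> F - V \<subseteq> escape R F G \<and>
     T \<subseteq> (escape R F G \<union> (X - F)) - G \<and> (\<forall>a\<in>V. \<forall>b. (a, b) \<in> R \<longrightarrow> b \<in> V \<union> G \<union> T))"

lemma surr_invariant_init:
  assumes "R \<subseteq> X \<times> X"
  shows "surr_invariant X R F G (F, closureR R (F \<union> G) - (F \<union> G))"
  using assms by (auto simp: surr_invariant_def closureR_def)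

lemma surr_invariant_step:
  assumes R: "R \<subseteq> X \<times> X" and "finite T" and inv: "surr_invariant X R F G (V, T)"
  shows "surr_invariant X R F G (surr_step X R G (V, T))"
proof -
  define P where "P = (\<Union>x\<in>T. pre X R x)"
  have V: "V \<subseteq> F" "F - V \<subseteq> escape R F G" and T: "T \<subseteq> (escape R F G \<union> (X - F)) - G"
    and V_edges: "\<forall>a\<in>V. \<forall>b. (a, b) \<in> R \<longrightarrow> b \<in> V \<union> G \<union> T"
    using inv by (auto simp: surr_invariant_def)
  have P_escape: "V \<inter> P \<subseteq> escape R F G"
  proof
    fix a assume "a \<in> V \<inter> P"
    then obtain t where "a \<in> F" "(a, t) \<in> R" "t \<in> T" using V(1) by (auto simp: P_def pre_def)
    then show "a \<in> escape R F G" using T escape_if_edge[of a F t R G] by blast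
  qed
  have "\<forall>a\<in>V - P. \<forall>b. (a, b) \<in> R \<longrightarrow> b \<in> (V - P) \<union> G \<union> ((V \<inter> P) - G)"
  proof (intro ballI allI impI)
    fix a b assume a: "a \<in> V - P" and ab: "(a, b) \<in> R"
    have "b \<notin> T" using a ab R by (auto simp: P_def pre_def)
    then show "b \<in> (V - P) \<union> G \<union> ((V \<inter> P) - G)" using V_edges a ab by blast
  qed
  then show ?thesis
    using V P_escape \<open>finite T\<close> by (auto simp: surr_invariant_def surr_step_eq P_def[symmetric])
qed

lemma surr_invariant_final:
  assumes "surr_invariant X R F G (V, {})"
  shows "V = F - escape R F G"
proof -
  have "V \<subseteq> F" "F - V \<subseteq> escape R F G" "\<forall>a\<in>V. \<forall>b. (a, b) \<in> R \<longrightarrow> b \<in> V \<union> G"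
    using assms by (auto simp: surr_invariant_def)
  then show ?thesis using escape_disjoint_if_closed[of V F R G] by blast
qed

lemma surr_step_decreases:
  assumes "finite V" "finite T" "T \<noteq> {}"
  shows "(surr_step X R G (V, T), (V, T)) \<in> measure (\<lambda>(V, T). card V + card T)"
proof -
  define P where "P = (\<Union>x\<in>T. pre X R x)"
  have "card (V - P) + card ((V \<inter> P) - G) \<le> card (V - P) + card (V \<inter> P)"
    using assms(1) by (intro add_left_mono card_mono) auto
  also have "\<dots> = card V" using card_Int_Diff[OF assms(1), of P] by simp
  also have "\<dots> < card V + card T" using assms(2,3) by (simp add: card_gt_0_iff)
  finally show ?thesis using assms(2) by (simp add: surr_step_eq P_def)
qed

lemma sat_surr_eq:
  assumes X: "finite X" "R \<subseteq> X \<times> X" "F \<subseteq> X"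
  shows "sat_surr X R F G = F - escape R F G"
  unfolding sat_surr_def
proof (rule while_rule[where P = "surr_invariant X R F G" and r = "measure (\<lambda>(V, T). card V + card T)"])
  have finite: "finite V" "finite T" if "surr_invariant X R F G (V, T)" for V T
  proof -
    have "V \<subseteq> X" "T \<subseteq> X" using that X(3) escape_subset[of R F G] by (auto simp: surr_invariant_def)
    then show "finite V" "finite T" using X(1) finite_subset by blast+
  qed
  show "surr_invariant X R F G (surr_step X R G s)" if "surr_invariant X R F G s" for s
    using that finite surr_invariant_step[OF X(2)] by (cases s) blast
  show "(surr_step X R G s, s) \<in> measure (\<lambda>(V, T). card V + card T)"
    if "surr_invariant X R F G s" "(\<lambda>(V, T). T \<noteq> {}) s" for s
    using that finite surr_step_decreases by (cases s) (simp only: prod.case, blast)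
  show "fst s = F - escape R F G" if "surr_invariant X R F G s" "\<not> (\<lambda>(V, T). T \<noteq> {}) s" for s
    using that surr_invariant_final by (cases s) (simp only: prod.case fst_conv not_not)
qed (use surr_invariant_init[OF X(2)] in auto)

subsection \<open>Correctness of the reach loop\<close>

definition reach_invariant ::
  "('a \<times> 'a) set \<Rightarrow> 'a set \<Rightarrow> 'a set \<Rightarrow> 'a set \<times> 'a set \<times> 'a set \<Rightarrow> bool" where
  "reach_invariant R A Q0 = (\<lambda>(T, Q, S). T \<subseteq> S \<and> Q = Q0 - S \<and> A \<subseteq> S \<and>
     S \<subseteq> (R \<inter> UNIV \<times> Q0)\<^sup>* `` A \<and> (\<forall>a\<in>S - T. \<forall>b. (a, b) \<in> R \<and> b \<in> Q0 \<longrightarrow> b \<in> S))"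

lemma reach_invariant_init: "reach_invariant R A Q0 (A, Q0 - A, A)"
  by (auto simp: reach_invariant_def)

lemma reach_invariant_step:
  assumes R: "R \<subseteq> X \<times> X" and "finite T" and inv: "reach_invariant R A Q0 (T, Q, S)"
  shows "reach_invariant R A Q0 (reach_step X R (T, Q, S))"
proof -
  define T' where "T' = (\<Union>x\<in>T. Q \<inter> post X R x)"
  have T: "T \<subseteq> S" and Q: "Q = Q0 - S" and S: "A \<subseteq> S" "S \<subseteq> (R \<inter> UNIV \<times> Q0)\<^sup>* `` A"
    and S_edges: "\<forall>a\<in>S - T. \<forall>b. (a, b) \<in> R \<and> b \<in> Q0 \<longrightarrow> b \<in> S"
    using inv by (auto simp: reach_invariant_def)
  have "T' \<subseteq> (R \<inter> UNIV \<times> Q0)\<^sup>* `` A"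
  proof
    fix b assume "b \<in> T'"
    then obtain a where "a \<in> T" "(a, b) \<in> R \<inter> UNIV \<times> Q0" using Q by (auto simp: T'_def post_def)
    then show "b \<in> (R \<inter> UNIV \<times> Q0)\<^sup>* `` A" using T S(2) by (blast intro: rtrancl_into_rtrancl)
  qed
  moreover have "b \<in> S \<union> T'" if "a \<in> (S \<union> T') - T'" "(a, b) \<in> R" "b \<in> Q0" for a b
  proof (cases "a \<in> T \<and> b \<notin> S")
    case True
    then have "b \<in> Q \<inter> post X R a" using Q R that(2,3) by (auto simp: post_def)
    then show ?thesis using True by (auto simp: T'_def)
  next
    case False
    moreover have "a \<in> S" using that(1) Q by (auto simp: T'_def)
    ultimately show ?thesis using S_edges that(2,3) by blast
  qed
  moreover have "Q - T' = Q0 - (S \<union> T')" using Q by blast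
  moreover have "reach_step X R (T, Q, S) = (T', Q - T', S \<union> T')"
    using \<open>finite T\<close> by (simp add: reach_step_eq T'_def)
  ultimately show ?thesis using T S unfolding reach_invariant_def by auto
qed

lemma reach_invariant_final:
  assumes "reach_invariant R A Q0 ({}, Q, S)"
  shows "S = (R \<inter> UNIV \<times> Q0)\<^sup>* `` A"
proof -
  have S: "A \<subseteq> S" "S \<subseteq> (R \<inter> UNIV \<times> Q0)\<^sup>* `` A"
    and closed: "\<forall>a\<in>S. \<forall>b. (a, b) \<in> R \<and> b \<in> Q0 \<longrightarrow> b \<in> S"
    using assms by (auto simp: reach_invariant_def)
  have "z \<in> S" if "(a, z) \<in> (R \<inter> UNIV \<times> Q0)\<^sup>*" "a \<in> A" for a z
    using that by (induction rule: rtrancl_induct) (use S closed in blast)+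
  then show ?thesis using S(2) by blast
qed

lemma reach_step_decreases:
  assumes "finite Q" "finite T" "T \<noteq> {}"
  shows "(reach_step X R (T, Q, S), (T, Q, S)) \<in> measure (\<lambda>(T, Q, S). card Q + card T)"
proof -
  define T' where "T' = (\<Union>x\<in>T. Q \<inter> post X R x)"
  have "T' \<subseteq> Q" by (auto simp: T'_def)
  then have "card (Q - T') + card T' = card Q"
    using card_Int_Diff[OF assms(1), of T'] by (simp add: Int_absorb1 Int_commute)
  also have "\<dots> < card Q + card T" using assms(2,3) by (simp add: card_gt_0_iff)
  finally show ?thesis using assms(2) by (simp add: reach_step_eq T'_def)
qed

lemma sat_reach_eq:
  assumes X: "finite X" "R \<subseteq> X \<times> X" "Q0 \<subseteq> X"
  shows "sat_reach X R V0 Q0 = (R \<inter> UNIV \<times> Q0)\<^sup>* `` (closureR R V0 \<inter> Q0)"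
  unfolding sat_reach_def Let_def
proof (rule while_rule[where P = "reach_invariant R (closureR R V0 \<inter> Q0) Q0"
      and r = "measure (\<lambda>(T, Q, S). card Q + card T)"])
  let ?A = "closureR R V0 \<inter> Q0"
  have finite: "finite Q" "finite T" if "reach_invariant R ?A Q0 (T, Q, S)" for T Q S
  proof -
    have "(R \<inter> UNIV \<times> Q0)\<^sup>* `` ?A \<subseteq> Q0" using rtrancl_restrict_target by fastforce
    then have "Q \<subseteq> X" "T \<subseteq> X" using that X(3) unfolding reach_invariant_def prod.case by blast+
    then show "finite Q" "finite T" using X(1) finite_subset by blast+
  qed
  show "reach_invariant R ?A Q0 (reach_step X R s)" if "reach_invariant R ?A Q0 s" for s
    using that finite reach_invariant_step[OF X(2)] by (cases s) blast
  show "(reach_step X R s, s) \<in> measure (\<lambda>(T, Q, S). card Q + card T)"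
    if "reach_invariant R ?A Q0 s" "(\<lambda>(T, Q, S). T \<noteq> {}) s" for s
    using that finite reach_step_decreases by (cases s) (simp only: prod.case, blast)
  show "snd (snd s) = (R \<inter> UNIV \<times> Q0)\<^sup>* `` ?A"
    if "reach_invariant R ?A Q0 s" "\<not> (\<lambda>(T, Q, S). T \<noteq> {}) s" for s
    using that reach_invariant_final by (cases s) (simp only: prod.case snd_conv not_not)
qed (use reach_invariant_init in auto)

lemma Sat_eq_models:
  assumes "qdcm X R V"
  shows "Sat X R V \<phi> = {x \<in> X. models X R V x \<phi>}"
proof -
  have X: "finite X" "R \<subseteq> X \<times> X" "V a \<subseteq> X" for a
    using assms by (auto simp: qdcm_def)
  show ?thesis
  proof (induction \<phi>)
    case (Atom a)
    then show ?case using X(3)[of a] by auto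
  next
    case (Near f)
    then show ?case using X(2) by (auto simp: closureR_def)
  next
    case (Surr f g)
    then show ?case using sat_surr_eq[OF X(1,2)] models_Surr_set[OF X(2), symmetric]
      by (simp del: models.simps(6))
  next
    case (Reach f g)
    then show ?case using sat_reach_eq[OF X(1,2)] models_Reach_set[OF X(2), symmetric]
      by (simp del: models.simps(7))
  qed auto
qed

theorem theorem6p3:
  fixes X :: "'a set" and R :: "('a \<times> 'a) set" and V :: "'p \<Rightarrow> 'a set"
    and \<phi> :: "'p slcs" and x :: 'a
  assumes "qdcm X R V" and "x \<in> X"
  shows "x \<in> Sat X R V \<phi> \<longleftrightarrow> models X R V x \<phi>"
  using Sat_eq_models[OF assms(1)] assms(2) by blast

end
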